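(* Let $L$ be a frame and $f\in\overline{\mathrm{H}}(L)$. Then for all $r,s\in\mathbb{Q}$: (1) $f(r,\textsf{---})=\bigvee_{p>r}f(\textsf{---},p)^\ast=\bigvee_{p>r}f(p,\textsf{---})^{\ast\ast}$; (2) $f(\textsf{---},s)=\bigvee_{q<s}f(q,\textsf{---})^\ast=\bigvee_{q<s}f(\textsf{---},q)^{\ast\ast}$.
   Context: $\mathbb{Q}$ is the rationals; $a^\ast$ denotes the pseudocomplement of $a$ in a frame. The frame $\mathfrak{L}(\overline{\mathbb{IR}})$ is presented by generators $(r,\textsf{---})$, $(\textsf{---},s)$ ($r,s\in\mathbb{Q}$) subject to (r1) $(r,\textsf{---})\wedge(\textsf{---},s)=0$ whenever $r\ge s$; (r3) $(r,\textsf{---})=\bigvee_{s>r}(s,\textsf{---})$; (r4) $(\textsf{---},s)=\bigvee_{r<s}(\textsf{---},r)$. $\overline{\mathrm{IC}}(L)$ is the set of frame homomorphisms $\mathfrak{L}(\overline{\mathbb{IR}})\to L$, and $\overline{\mathrm{H}}(L)$ (Hausdorff continuous extended functions) is the set of $f\in\overline{\mathrm{IC}}(L)$ with $f(r,\textsf{---})^\ast\le f(\textsf{---},s)$ and $f(\textsf{---},s)^\ast\le f(r,\textsf{---})$ for all $r<s$ in $\mathbb{Q}$. *)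

theory Defs
  imports Complex_Main
begin

definition is_frame :: "'a::complete_lattice itself \<Rightarrow> bool" where
  "is_frame _ \<longleftrightarrow> (\<forall>(a::'a) S. inf a (Sup S) = Sup ((\<lambda>s. inf a s) ` S))"

definition pcomp :: "'a::complete_lattice \<Rightarrow> 'a" where
  "pcomp a = Sup {x. inf x a = bot}"

text \<open>Generators of the frame of extended partial reals:
  Lft r stands for (r,---), Rgt s stands for (---,s).\<close>
datatype gen = Lft rat | Rgt rat

text \<open>By the universal property of frame presentations, frame homomorphisms
  from the presented frame to L correspond exactly to maps on generators
  that turn the defining relations (r1), (r3), (r4) into valid identities in L.\<close>
definition IC_ext :: "(gen \<Rightarrow> 'a::complete_lattice) \<Rightarrow> bool" where
  "IC_ext f \<longleftrightarrow>
     (\<forall>r s. s \<le> r \<longrightarrow> inf (f (Lft r)) (f (Rgt s)) = bot) \<and>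
     (\<forall>r. f (Lft r) = (SUP s\<in>{s. r < s}. f (Lft s))) \<and>
     (\<forall>s. f (Rgt s) = (SUP r\<in>{r. r < s}. f (Rgt r)))"

definition H_ext :: "(gen \<Rightarrow> 'a::complete_lattice) \<Rightarrow> bool" where
  "H_ext f \<longleftrightarrow> IC_ext f \<and>
     (\<forall>r s. r < s \<longrightarrow> pcomp (f (Lft r)) \<le> f (Rgt s) \<and> pcomp (f (Rgt s)) \<le> f (Lft r))"

end

theory Submission
  imports Defs
begin

text \<open>Each of the four joins is squeezed between the approximation of the left-hand side
  given by (r3) or (r4) and the left-hand side itself.  From below: relation (r1) at
  r = s gives f(p,---) \<le> f(---,p)* and f(---,p) \<le> f(p,---)*, and a \<le> a** in a frame.
  From above: Hausdorff continuity bounds f(---,p)* by f(r,---) and f(q,---)* by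
  f(---,s), and the double pseudocomplements are reduced to these by antitonicity.\<close>

lemma le_pcompI:
  fixes x a :: "'a::complete_lattice"
  assumes "inf x a = bot"
  shows "x \<le> pcomp a"
  using assms unfolding pcomp_def by (simp add: Sup_upper)

lemma pcomp_antimono:
  fixes a b :: "'a::complete_lattice"
  assumes "a \<le> b"
  shows "pcomp b \<le> pcomp a"
  unfolding pcomp_def
proof (rule Sup_subset_mono, safe)
  fix x assume "inf x b = bot"
  then show "inf x a = bot"
    using assms by (metis bot_unique inf_mono order_refl)
qed

lemma inf_pcomp_eq_bot:
  fixes a :: "'a::complete_lattice"
  assumes "is_frame TYPE('a)"
  shows "inf a (pcomp a) = bot"
proof -
  have "inf a (pcomp a) = Sup ((\<lambda>x. inf a x) ` {x. inf x a = bot})"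
    using assms unfolding is_frame_def pcomp_def by blast
  also have "\<dots> = bot"
    by (auto simp: inf_commute intro!: Sup_eqI)
  finally show ?thesis .
qed

lemma le_pcomp_pcomp:
  fixes a :: "'a::complete_lattice"
  assumes "is_frame TYPE('a)"
  shows "a \<le> pcomp (pcomp a)"
  using inf_pcomp_eq_bot[OF assms] by (intro le_pcompI)

lemma eq_SUP_if_squeezed:
  fixes x :: "'a::complete_lattice"
  assumes "x = (SUP i\<in>I. a i)"
    and "\<And>i. i \<in> I \<Longrightarrow> a i \<le> b i"
    and "\<And>i. i \<in> I \<Longrightarrow> b i \<le> x"
  shows "x = (SUP i\<in>I. b i)"
proof (rule antisym)
  show "x \<le> (SUP i\<in>I. b i)"
    unfolding assms(1) using assms(2) by (blast intro: SUP_mono)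
  show "(SUP i\<in>I. b i) \<le> x"
    by (rule SUP_least) (rule assms(3))
qed

lemma IC_ext_Lft_le_pcomp_Rgt:
  assumes "IC_ext f"
  shows "f (Lft p) \<le> pcomp (f (Rgt p))"
  using assms unfolding IC_ext_def by (blast intro: le_pcompI)

lemma IC_ext_Rgt_le_pcomp_Lft:
  assumes "IC_ext f"
  shows "f (Rgt p) \<le> pcomp (f (Lft p))"
proof (rule le_pcompI)
  have "inf (f (Lft p)) (f (Rgt p)) = bot"
    using assms unfolding IC_ext_def by blast
  then show "inf (f (Rgt p)) (f (Lft p)) = bot"
    by (simp only: inf_commute)
qed

lemma H_ext_Lft_eq_SUP_pcomp_Rgt:
  assumes H: "H_ext f"
  shows "f (Lft r) = (SUP p\<in>{p. r < p}. pcomp (f (Rgt p)))"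
proof (rule eq_SUP_if_squeezed)
  show "f (Lft r) = (SUP p\<in>{p. r < p}. f (Lft p))"
    using H unfolding H_ext_def IC_ext_def by blast
  show "f (Lft p) \<le> pcomp (f (Rgt p))" for p
    using H unfolding H_ext_def by (blast intro: IC_ext_Lft_le_pcomp_Rgt)
  show "pcomp (f (Rgt p)) \<le> f (Lft r)" if "p \<in> {p. r < p}" for p
    using H that unfolding H_ext_def by simp
qed

lemma H_ext_Rgt_eq_SUP_pcomp_Lft:
  assumes H: "H_ext f"
  shows "f (Rgt s) = (SUP q\<in>{q. q < s}. pcomp (f (Lft q)))"
proof (rule eq_SUP_if_squeezed)
  show "f (Rgt s) = (SUP q\<in>{q. q < s}. f (Rgt q))"
    using H unfolding H_ext_def IC_ext_def by blast
  show "f (Rgt q) \<le> pcomp (f (Lft q))" for q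
    using H unfolding H_ext_def by (blast intro: IC_ext_Rgt_le_pcomp_Lft)
  show "pcomp (f (Lft q)) \<le> f (Rgt s)" if "q \<in> {q. q < s}" for q
    using H that unfolding H_ext_def by simp
qed

lemma H_ext_Lft_eq_SUP_pcomp_pcomp_Lft:
  fixes f :: "gen \<Rightarrow> 'a::complete_lattice"
  assumes frame: "is_frame TYPE('a)" and H: "H_ext f"
  shows "f (Lft r) = (SUP p\<in>{p. r < p}. pcomp (pcomp (f (Lft p))))"
proof (rule eq_SUP_if_squeezed)
  show "f (Lft r) = (SUP p\<in>{p. r < p}. f (Lft p))"
    using H unfolding H_ext_def IC_ext_def by blast
  show "f (Lft p) \<le> pcomp (pcomp (f (Lft p)))" for p
    using frame by (rule le_pcomp_pcomp)
  fix p assume "p \<in> {p. r < p}"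
  have "pcomp (pcomp (f (Lft p))) \<le> pcomp (f (Rgt p))"
    using H unfolding H_ext_def by (intro pcomp_antimono IC_ext_Rgt_le_pcomp_Lft) blast
  also have "\<dots> \<le> f (Lft r)"
    using H \<open>p \<in> {p. r < p}\<close> unfolding H_ext_def by simp
  finally show "pcomp (pcomp (f (Lft p))) \<le> f (Lft r)" .
qed

lemma H_ext_Rgt_eq_SUP_pcomp_pcomp_Rgt:
  fixes f :: "gen \<Rightarrow> 'a::complete_lattice"
  assumes frame: "is_frame TYPE('a)" and H: "H_ext f"
  shows "f (Rgt s) = (SUP q\<in>{q. q < s}. pcomp (pcomp (f (Rgt q))))"
proof (rule eq_SUP_if_squeezed)
  show "f (Rgt s) = (SUP q\<in>{q. q < s}. f (Rgt q))"
    using H unfolding H_ext_def IC_ext_def by blast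
  show "f (Rgt q) \<le> pcomp (pcomp (f (Rgt q)))" for q
    using frame by (rule le_pcomp_pcomp)
  fix q assume "q \<in> {q. q < s}"
  have "pcomp (pcomp (f (Rgt q))) \<le> pcomp (f (Lft q))"
    using H unfolding H_ext_def by (intro pcomp_antimono IC_ext_Lft_le_pcomp_Rgt) blast
  also have "\<dots> \<le> f (Rgt s)"
    using H \<open>q \<in> {q. q < s}\<close> unfolding H_ext_def by simp
  finally show "pcomp (pcomp (f (Rgt q))) \<le> f (Rgt s)" .
qed

theorem lemma3p4:
  fixes f :: "gen \<Rightarrow> 'a::complete_lattice"
  assumes "is_frame TYPE('a)"
    and "H_ext f"
  shows "\<forall>r s.
     f (Lft r) = (SUP p\<in>{p. r < p}. pcomp (f (Rgt p))) \<and>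
     f (Lft r) = (SUP p\<in>{p. r < p}. pcomp (pcomp (f (Lft p)))) \<and>
     f (Rgt s) = (SUP q\<in>{q. q < s}. pcomp (f (Lft q))) \<and>
     f (Rgt s) = (SUP q\<in>{q. q < s}. pcomp (pcomp (f (Rgt q))))"
  by (intro allI conjI H_ext_Lft_eq_SUP_pcomp_Rgt H_ext_Lft_eq_SUP_pcomp_pcomp_Lft
      H_ext_Rgt_eq_SUP_pcomp_Lft H_ext_Rgt_eq_SUP_pcomp_pcomp_Rgt assms)

end
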